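(* Let $t\ge -1$ be an integer, let $\theta$ be a root of $P_t(x)=x^3-tx^2-(t+3)x-1$ and $K=\mathbb{Q}(\theta)$ (a simplest cubic field). Suppose that $\mathcal{O}_K=\mathbb{Z}[\theta]$. Then $K$ is unit reducible.
   Context: For a totally real number field $K$ with ring of integers $\mathcal{O}_K$ and unit group $\mathcal{O}_K^\times$, let $K_{>>0}$ be the set of totally positive elements and, for $a\in K_{>>0}$, $\mu(a)=\min_{x\in\mathcal{O}_K\setminus\{0\}}\mathrm{Tr}_{K/\mathbb{Q}}(ax^2)$. $K$ is called unit reducible if $\mu(a)=\min_{u\in\mathcal{O}_K^\times}\mathrm{Tr}_{K/\mathbb{Q}}(au^2)$ for all $a\in K_{>>0}$. *)

theory Defs
  imports "HOL-Computational_Algebra.Polynomial" Complex_Main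
begin

definition simplest_cubic :: "int \<Rightarrow> real poly" where
  "simplest_cubic t = [:-1, -(of_int t + 3), - of_int t, 1:]"

text \<open>Q(theta) as a subfield of the reals (theta algebraic, so Q(theta) = Q[theta]).\<close>
definition Q_adj :: "real \<Rightarrow> real set" where
  "Q_adj \<theta> = {poly (map_poly of_rat q) \<theta> | q :: rat poly. True}"

definition Z_adj :: "real \<Rightarrow> real set" where
  "Z_adj \<theta> = {poly (map_poly of_int p) \<theta> | p :: int poly. True}"

text \<open>Field embeddings of a subfield K of the reals into the complex numbers
  (extended by 0 outside K so that they form a set of functions).\<close>
definition embeddings :: "real set \<Rightarrow> (real \<Rightarrow> complex) set" where
  "embeddings K = {\<sigma>. \<sigma> 1 = 1 \<and>
      (\<forall>x\<in>K. \<forall>y\<in>K. \<sigma> (x + y) = \<sigma> x + \<sigma> y \<and> \<sigma> (x * y) = \<sigma> x * \<sigma> y) \<and>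
      (\<forall>x. x \<notin> K \<longrightarrow> \<sigma> x = 0)}"

text \<open>Trace Tr_{K/Q}: sum of all embeddings (real-valued for the fields considered).\<close>
definition trace :: "real set \<Rightarrow> real \<Rightarrow> real" where
  "trace K x = Re (\<Sum>\<sigma>\<in>embeddings K. \<sigma> x)"

definition totally_positive :: "real set \<Rightarrow> real set" where
  "totally_positive K = {a \<in> K. \<forall>\<sigma>\<in>embeddings K. \<sigma> a \<in> \<real> \<and> Re (\<sigma> a) > 0}"

definition ring_of_integers :: "real set \<Rightarrow> real set" where
  "ring_of_integers K = {x \<in> K. algebraic_int x}"

definition unit_group :: "real set \<Rightarrow> real set" where
  "unit_group K = {u \<in> ring_of_integers K. u \<noteq> 0 \<and> inverse u \<in> ring_of_integers K}"

text \<open>mu(a) = min over nonzero integers x of Tr(a x^2) (the minimum exists; we write Inf).\<close>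
definition mu :: "real set \<Rightarrow> real \<Rightarrow> real" where
  "mu K a = Inf ((\<lambda>x. trace K (a * x\<^sup>2)) ` (ring_of_integers K - {0}))"

definition unit_reducible :: "real set \<Rightarrow> bool" where
  "unit_reducible K \<longleftrightarrow>
     (\<forall>a\<in>totally_positive K. mu K a = Inf ((\<lambda>u. trace K (a * u\<^sup>2)) ` unit_group K))"

end

theory Submission
  imports Defs "HOL-Library.Product_Plus"
begin

(* Write elements of K = Q(theta) in the basis 1, theta, theta^2.  For a totally positive a, the
   values Tr(a u^2) over units u are bounded below and only finitely many lie below any bound,
   so some unit v minimises them; replacing a by a v^2 we may assume Tr(a u^2) >= Tr(a) for all
   units u, in particular for the six units theta^(+-1), theta'^(+-1), theta''^(+-1) built from
   the conjugates of theta.  These six linear conditions cut out a cone of trace forms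
   z |-> Tr(a z^2) which is covered by four simplicial cones.  Each cone is spanned by three
   forms that are (t^2 + 3t + 9) times either a sum of three squares or a hexagonal form in
   unimodular coordinates, and all of these attain their minimum over nonzero integral z at
   z = 1.  Hence so does Tr(a z^2), i.e. mu(a) is attained at the unit v. *)

section \<open>Coordinates with respect to \<open>1, \<theta>, \<theta>\<^sup>2\<close>\<close>

type_synonym coords = "real \<times> real \<times> real"

definition coord :: "coords \<Rightarrow> nat \<Rightarrow> real" where
  "coord c i = (case c of (c0, c1, c2) \<Rightarrow> [c0, c1, c2] ! i)"

definition from_coords :: "real \<Rightarrow> coords \<Rightarrow> real" where
  "from_coords x c = (\<Sum>i<3. coord c i * x ^ i)"

definition coords_in :: "real set \<Rightarrow> coords \<Rightarrow> bool" where
  "coords_in S c \<longleftrightarrow> (\<forall>i<3. coord c i \<in> S)"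

lemma from_coords_eq: "from_coords x (c0, c1, c2) = c0 + c1 * x + c2 * x^2"
  by (simp add: from_coords_def coord_def eval_nat_numeral)

lemma coords_in_iff [simp]: "coords_in S (c0, c1, c2) \<longleftrightarrow> c0 \<in> S \<and> c1 \<in> S \<and> c2 \<in> S"
  by (auto simp: coords_in_def coord_def less_Suc_eq numeral_eq_Suc)

lemma coords_in_mono: "S \<subseteq> T \<Longrightarrow> coords_in S c \<Longrightarrow> coords_in T c"
  by (auto simp: coords_in_def)

lemma from_coords_add: "from_coords x (c + d) = from_coords x c + from_coords x d"
  by (cases c, cases d) (simp add: from_coords_eq algebra_simps)

lemma coords_in_Rats_add: "coords_in \<rat> c \<Longrightarrow> coords_in \<rat> d \<Longrightarrow> coords_in \<rat> (c + d)"
  by (cases c, cases d) simp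

definition mult_coords :: "real \<Rightarrow> coords \<Rightarrow> coords \<Rightarrow> coords" where
  "mult_coords t c d = (case c of (c0, c1, c2) \<Rightarrow> case d of (d0, d1, d2) \<Rightarrow>
     (c0*d0 + (c1*d2 + c2*d1) + t*(c2*d2),
      (c0*d1 + c1*d0) + (t+3)*(c1*d2 + c2*d1) + (t^2+3*t+1)*(c2*d2),
      (c0*d2 + c1*d1 + c2*d0) + t*(c1*d2 + c2*d1) + (t^2+t+3)*(c2*d2)))"

lemma from_coords_mult:
  assumes "x^3 = t * x^2 + (t+3) * x + 1"
  shows "from_coords x c * from_coords x d = from_coords x (mult_coords t c d)"
proof -
  obtain c0 c1 c2 d0 d1 d2 where c: "c = (c0, c1, c2)" and d: "d = (d0, d1, d2)"
    by (cases c, cases d)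
  show ?thesis
    unfolding c d using assms by (simp add: mult_coords_def from_coords_eq) algebra
qed

lemma coords_in_Ints_mult_coords:
  "t \<in> \<int> \<Longrightarrow> coords_in \<int> c \<Longrightarrow> coords_in \<int> d \<Longrightarrow> coords_in \<int> (mult_coords t c d)"
  by (cases c, cases d) (auto simp: mult_coords_def)

lemma coords_in_Rats_mult_coords:
  "t \<in> \<int> \<Longrightarrow> coords_in \<rat> c \<Longrightarrow> coords_in \<rat> d \<Longrightarrow> coords_in \<rat> (mult_coords t c d)"
  using Ints_subset_Rats by (cases c, cases d) (auto simp: mult_coords_def)

lemma abs_lin_comb_le:
  fixes a b c M :: real
  assumes "\<bar>a\<bar> \<le> M" "\<bar>b\<bar> \<le> M" "\<bar>c\<bar> \<le> M"
  shows "\<bar>ka * a + kb * b + kc * c\<bar> \<le> (\<bar>ka\<bar> + \<bar>kb\<bar> + \<bar>kc\<bar>) * M"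
proof -
  have "\<bar>ka * a + kb * b + kc * c\<bar> \<le> \<bar>ka * a\<bar> + \<bar>kb * b\<bar> + \<bar>kc * c\<bar>"
    by (rule order_trans[OF abs_triangle_ineq add_right_mono[OF abs_triangle_ineq]])
  also have "\<dots> = \<bar>ka\<bar> * \<bar>a\<bar> + \<bar>kb\<bar> * \<bar>b\<bar> + \<bar>kc\<bar> * \<bar>c\<bar>"
    by (simp add: abs_mult)
  also have "\<dots> \<le> \<bar>ka\<bar> * M + \<bar>kb\<bar> * M + \<bar>kc\<bar> * M"
    using assms by (intro add_mono mult_left_mono) auto
  finally show ?thesis by (simp add: algebra_simps)
qed

lemma abs_le_of_weighted_sum_squares_le:
  fixes w v :: "nat \<Rightarrow> real"
  assumes w: "\<And>i. i < 3 \<Longrightarrow> 0 < w i" and sum_le: "(\<Sum>i<3. w i * (v i)^2) \<le> C" and j: "j < 3"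
  shows "\<bar>v j\<bar> \<le> 1 + (\<Sum>i<3. \<bar>C\<bar> / w i)"
proof -
  have "w j * (v j)^2 \<le> (\<Sum>i<3. w i * (v i)^2)"
    using j w by (intro member_le_sum) (auto simp: less_imp_le)
  then have "(v j)^2 \<le> \<bar>C\<bar> / w j"
    using sum_le w[OF j] by (simp add: pos_le_divide_eq mult.commute)
  also have "\<dots> \<le> (\<Sum>i<3. \<bar>C\<bar> / w i)"
    using j w by (intro member_le_sum) (auto simp: less_imp_le)
  moreover have "\<bar>v j\<bar> \<le> 1 + (v j)^2"
    using zero_le_power2[of "\<bar>v j\<bar> - 1"] by (simp add: power2_eq_square algebra_simps)
  ultimately show ?thesis by linarith
qed

lemma coords_bounded_by_values:
  assumes "x0 \<noteq> x1" "x0 \<noteq> x2" "x1 \<noteq> x2"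
  obtains B where "\<And>c0 c1 c2 M. \<bar>from_coords x0 (c0, c1, c2)\<bar> \<le> M \<Longrightarrow> \<bar>from_coords x1 (c0, c1, c2)\<bar> \<le> M
    \<Longrightarrow> \<bar>from_coords x2 (c0, c1, c2)\<bar> \<le> M \<Longrightarrow> \<bar>c0\<bar> \<le> B * M \<and> \<bar>c1\<bar> \<le> B * M \<and> \<bar>c2\<bar> \<le> B * M"
proof -
  define k0 k1 k2 where "k0 = 1 / ((x0 - x1) * (x0 - x2))" and "k1 = 1 / ((x1 - x0) * (x1 - x2))"
    and "k2 = 1 / ((x2 - x0) * (x2 - x1))"
  have k: "k0 * ((x0 - x1) * (x0 - x2)) = 1" "k1 * ((x1 - x0) * (x1 - x2)) = 1"
    "k2 * ((x2 - x0) * (x2 - x1)) = 1"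
    using assms by (simp_all add: k0_def k1_def k2_def)
  define B0 B1 B2 where "B0 = \<bar>x1*x2*k0\<bar> + \<bar>x0*x2*k1\<bar> + \<bar>x0*x1*k2\<bar>"
    and "B1 = \<bar>-(x1+x2)*k0\<bar> + \<bar>-(x0+x2)*k1\<bar> + \<bar>-(x0+x1)*k2\<bar>" and "B2 = \<bar>k0\<bar> + \<bar>k1\<bar> + \<bar>k2\<bar>"
  show ?thesis
  proof (rule that[of "B0 + B1 + B2"], intro conjI)
    fix c0 c1 c2 M
    define v0 v1 v2 where "v0 = from_coords x0 (c0, c1, c2)" and "v1 = from_coords x1 (c0, c1, c2)"
      and "v2 = from_coords x2 (c0, c1, c2)"
    assume "\<bar>v0\<bar> \<le> M" "\<bar>v1\<bar> \<le> M" "\<bar>v2\<bar> \<le> M"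
    note bound = abs_lin_comb_le[OF this]
    have "0 \<le> M" using \<open>\<bar>v0\<bar> \<le> M\<close> by simp
    have nonneg: "0 \<le> B0" "0 \<le> B1" "0 \<le> B2" by (simp_all add: B0_def B1_def B2_def)
    \<comment> \<open>Lagrange interpolation through the nodes \<open>x0, x1, x2\<close>\<close>
    have "c0 = x1*x2*k0 * v0 + x0*x2*k1 * v1 + x0*x1*k2 * v2"
      "c1 = -(x1+x2)*k0 * v0 + -(x0+x2)*k1 * v1 + -(x0+x1)*k2 * v2"
      "c2 = k0 * v0 + k1 * v1 + k2 * v2"
      unfolding v0_def v1_def v2_def from_coords_eq using k by algebra+
    then have "\<bar>c0\<bar> \<le> B0 * M" "\<bar>c1\<bar> \<le> B1 * M" "\<bar>c2\<bar> \<le> B2 * M"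
      unfolding B0_def B1_def B2_def by (simp_all only: bound)
    moreover have "B0 * M \<le> (B0 + B1 + B2) * M" "B1 * M \<le> (B0 + B1 + B2) * M"
      "B2 * M \<le> (B0 + B1 + B2) * M"
      using nonneg \<open>0 \<le> M\<close> by (auto intro!: mult_right_mono)
    ultimately show "\<bar>c0\<bar> \<le> (B0 + B1 + B2) * M" "\<bar>c1\<bar> \<le> (B0 + B1 + B2) * M"
      "\<bar>c2\<bar> \<le> (B0 + B1 + B2) * M"
      by linarith+
  qed
qed

section \<open>Trace forms minimal at \<open>1\<close>\<close>

text \<open>Newton's recursion: \<open>power_sum t n\<close> is the sum of the \<open>n\<close>-th powers of the roots of
  \<open>x\<^sup>3 - t x\<^sup>2 - (t + 3) x - 1\<close>, so that \<open>trace_form t c z\<close> is \<open>Tr(c z\<^sup>2)\<close> in coordinates.\<close>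

fun power_sum :: "real \<Rightarrow> nat \<Rightarrow> real" where
  "power_sum t 0 = 3"
| "power_sum t (Suc 0) = t"
| "power_sum t (Suc (Suc 0)) = t\<^sup>2 + 2 * t + 6"
| "power_sum t (Suc (Suc (Suc n))) =
     t * power_sum t (Suc (Suc n)) + (t + 3) * power_sum t (Suc n) + power_sum t n"

lemma power_sum_numeral:
  "power_sum t 1 = t"
  "power_sum t 2 = t^2 + 2*t + 6"
  "power_sum t 3 = t^3 + 3*t^2 + 9*t + 3"
  "power_sum t 4 = t^4 + 4*t^3 + 14*t^2 + 16*t + 18"
  "power_sum t 5 = t^5 + 5*t^4 + 20*t^3 + 35*t^2 + 50*t + 15"
  "power_sum t 6 = t^6 + 6*t^5 + 27*t^4 + 62*t^3 + 111*t^2 + 90*t + 57"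
  by (simp_all add: eval_nat_numeral algebra_simps power2_eq_square power3_eq_cube)

definition trace_form :: "real \<Rightarrow> coords \<Rightarrow> coords \<Rightarrow> real" where
  "trace_form t c z =
     (\<Sum>j<3. \<Sum>k<3. \<Sum>i<3. coord c i * coord z j * coord z k * power_sum t (i + j + k))"

definition trace_excess :: "real \<Rightarrow> coords \<Rightarrow> coords \<Rightarrow> real" where
  "trace_excess t c z = trace_form t c z - trace_form t c (1, 0, 0)"

definition minimal_at_one :: "real \<Rightarrow> coords \<Rightarrow> bool" where
  "minimal_at_one t c \<longleftrightarrow>
     (\<forall>z. coords_in \<int> z \<and> z \<noteq> (0, 0, 0) \<longrightarrow> 0 \<le> trace_excess t c z)"

lemma sum_lessThan_three: "(\<Sum>j<3. f j) = f 0 + f 1 + f (2::nat)"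
  by (simp add: eval_nat_numeral)

lemma sum_swap_outermost:
  "(\<Sum>m\<in>A. \<Sum>j\<in>B. \<Sum>k\<in>C. \<Sum>i\<in>D. g m j k i) = (\<Sum>j\<in>B. \<Sum>k\<in>C. \<Sum>i\<in>D. \<Sum>m\<in>A. g m j k i)"
  by (rule trans[OF sum.swap], rule sum.cong[OF refl], rule trans[OF sum.swap],
      rule sum.cong[OF refl], rule sum.swap)

lemma trace_form_eq_sum_conjugates:
  fixes r :: "nat \<Rightarrow> real"
  assumes "\<And>n. (\<Sum>m<3. r m ^ n) = power_sum t n"
  shows "(\<Sum>m<3. from_coords (r m) c * (from_coords (r m) z)^2) = trace_form t c z"
proof -
  have "from_coords x c * (from_coords x z)^2 =
      (\<Sum>j<3. \<Sum>k<3. \<Sum>i<3. coord c i * coord z j * coord z k * x ^ (i + j + k))" for x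
    by (simp add: from_coords_def power2_eq_square sum_distrib_left sum_distrib_right power_add mult_ac)
  then have "(\<Sum>m<3. from_coords (r m) c * (from_coords (r m) z)^2) =
      (\<Sum>m<3. \<Sum>j<3. \<Sum>k<3. \<Sum>i<3. coord c i * coord z j * coord z k * r m ^ (i + j + k))"
    by simp
  also have "\<dots> = (\<Sum>j<3. \<Sum>k<3. \<Sum>i<3. \<Sum>m<3. coord c i * coord z j * coord z k * r m ^ (i + j + k))"
    by (rule sum_swap_outermost)
  also have "\<dots> = trace_form t c z"
    by (simp add: trace_form_def assms[symmetric] sum_distrib_left)
  finally show ?thesis .
qed

lemma trace_form_eq:
  "trace_form t (c0, c1, c2) (z0, z1, z2) =
     c0 * (z0^2 * power_sum t 0 + 2*z0*z1 * power_sum t 1 + (2*z0*z2 + z1^2) * power_sum t 2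
       + 2*z1*z2 * power_sum t 3 + z2^2 * power_sum t 4)
   + c1 * (z0^2 * power_sum t 1 + 2*z0*z1 * power_sum t 2 + (2*z0*z2 + z1^2) * power_sum t 3
       + 2*z1*z2 * power_sum t 4 + z2^2 * power_sum t 5)
   + c2 * (z0^2 * power_sum t 2 + 2*z0*z1 * power_sum t 3 + (2*z0*z2 + z1^2) * power_sum t 4
       + 2*z1*z2 * power_sum t 5 + z2^2 * power_sum t 6)"
  by (simp add: trace_form_def coord_def eval_nat_numeral algebra_simps power2_eq_square)

lemma trace_excess_eq:
  "trace_excess t (c0, c1, c2) (z0, z1, z2) =
     trace_form t (c0, c1, c2) (z0, z1, z2) - (3*c0 + t*c1 + (t^2+2*t+6)*c2)"
  by (simp add: trace_excess_def trace_form_eq power_sum_numeral)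

lemma sqrt_disc_pos: "0 < (t::real)^2 + 3*t + 9"
  and center_scale_pos: "0 < ((t::real)^2 + 3*t + 9) * (t^2 + 3*t + 3)"
proof -
  have "0 \<le> (t + 3/2)^2" by simp
  then have "0 < t^2 + 3*t + 9" "0 < t^2 + 3*t + 3" by (simp_all add: power2_eq_square algebra_simps)
  then show "0 < t^2 + 3*t + 9" "0 < (t^2 + 3*t + 9) * (t^2 + 3*t + 3)" by simp_all
qed

lemma minimal_at_one_if_multiple:
  assumes "\<And>z0 z1 z2. trace_form t g (z0, z1, z2) = (t^2+3*t+9) * Q z0 z1 z2"
    and "\<And>z0 z1 z2. z0 \<in> \<int> \<Longrightarrow> z1 \<in> \<int> \<Longrightarrow> z2 \<in> \<int> \<Longrightarrow> (z0, z1, z2) \<noteq> (0, 0, 0)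
           \<Longrightarrow> Q 1 0 0 \<le> Q z0 z1 z2"
  shows "minimal_at_one t g"
  unfolding minimal_at_one_def trace_excess_def
  using assms sqrt_disc_pos[of t] by (auto intro!: mult_left_mono)

lemma minimal_at_one_cone:
  assumes "0 < D" "0 \<le> l1" "0 \<le> l2" "0 \<le> l3"
    and "minimal_at_one t g1" "minimal_at_one t g2" "minimal_at_one t g3"
    and "\<And>z0 z1 z2. D * trace_excess t c (z0, z1, z2) = l1 * trace_excess t g1 (z0, z1, z2)
           + l2 * trace_excess t g2 (z0, z1, z2) + l3 * trace_excess t g3 (z0, z1, z2)"
  shows "minimal_at_one t c"
  unfolding minimal_at_one_def
proof (intro allI impI)
  fix z assume "coords_in \<int> z \<and> z \<noteq> (0, 0, 0)"
  moreover obtain z0 z1 z2 where z: "z = (z0, z1, z2)" by (cases z)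
  ultimately have "0 \<le> trace_excess t g1 z" "0 \<le> trace_excess t g2 z" "0 \<le> trace_excess t g3 z"
    using assms(5-7) unfolding minimal_at_one_def by blast+
  then have "0 \<le> D * trace_excess t c z"
    using assms(2-4) by (simp add: z assms(8))
  then show "0 \<le> trace_excess t c z"
    using assms(1) by (simp add: zero_le_mult_iff)
qed

lemma Ints_nonzero_square_ge_one: "(v::real) \<in> \<int> \<Longrightarrow> v \<noteq> 0 \<Longrightarrow> 1 \<le> v^2"
  using one_le_power[OF Ints_nonzero_abs_ge1, of v 2] by simp

lemma sum_squares_ge_one:
  fixes x y w :: real
  assumes "x \<in> \<int>" "y \<in> \<int>" "w \<in> \<int>" "(x, y, w) \<noteq> (0, 0, 0)"
  shows "1 \<le> x^2 + y^2 + w^2"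
proof -
  have "1 \<le> x^2 \<or> 1 \<le> y^2 \<or> 1 \<le> w^2" using assms Ints_nonzero_square_ge_one by auto
  then show ?thesis using zero_le_power2[of x] zero_le_power2[of y] zero_le_power2[of w]
    by (elim disjE) linarith+
qed

definition hex_form :: "real \<Rightarrow> real \<Rightarrow> real \<Rightarrow> real \<Rightarrow> real" where
  "hex_form t x y w = 2 * (x^2 + y^2 - x*y) + 2*(t+2) * x * w - 2 * y * w + (t^2+3*t+5) * w^2"

lemma hex_form_unit [simp]: "hex_form t 1 0 0 = 2"
  by (simp add: hex_form_def)

lemma hex_form_ge_two:
  fixes x y w :: real
  assumes "x \<in> \<int>" "y \<in> \<int>" "w \<in> \<int>" "(x, y, w) \<noteq> (0, 0, 0)"
  shows "2 \<le> hex_form t x y w"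
proof (cases "w = 0")
  case True
  have "hex_form t x y w = x^2 + y^2 + (x - y)^2"
    using True by (simp add: hex_form_def power2_eq_square algebra_simps)
  moreover have "x - y \<in> \<int>" using assms by simp
  ultimately show ?thesis using assms True Ints_nonzero_square_ge_one[of x]
      Ints_nonzero_square_ge_one[of y] Ints_nonzero_square_ge_one[of "x - y"]
    by (cases "x = 0"; cases "y = 0"; cases "x = y") auto
next
  case False
  have "hex_form t x y w =
      2 * (x - y/2 + (t+2)*w/2)^2 + 3/2 * (y + t*w/3)^2 + (t^2+3*t+9)/3 * w^2"
    by (simp add: hex_form_def power2_eq_square field_simps)
  moreover have "6 * 1 \<le> (t^2+3*t+9) * w^2"
  proof (rule mult_mono)
    have "0 \<le> (t + 3/2)^2" by simp
    then show "6 \<le> t^2+3*t+9" by (simp add: power2_eq_square algebra_simps)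
    show "1 \<le> w^2" using Ints_nonzero_square_ge_one assms(3) False by simp
  qed (use sqrt_disc_pos[of t] in simp_all)
  ultimately show ?thesis
    using zero_le_power2[of "x - y/2 + (t+2)*w/2"] zero_le_power2[of "y + t*w/3"] by linarith
qed

definition sq_gen1 :: "real \<Rightarrow> coords" where "sq_gen1 t = (t^2+4*t+7, (t+1)^2, -(t+2))"
definition sq_gen2 :: coords where "sq_gen2 = (1, 1, 1)"
definition sq_gen3 :: "real \<Rightarrow> coords" where "sq_gen3 t = (1-t, -(t^2+2*t+2), t+1)"
definition hex_gen1 :: "real \<Rightarrow> coords" where "hex_gen1 t = (-t, -(t^2+3*t+3), t+3)"
definition hex_gen2 :: "real \<Rightarrow> coords" where "hex_gen2 t = (t^2+4*t+12, 2*t, -3)"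
definition hex_gen3 :: "real \<Rightarrow> coords" where "hex_gen3 t = (t^2+3*t+6, t^2+t+3, -t)"

lemma minimal_at_one_sq_gen1: "t \<in> \<int> \<Longrightarrow> minimal_at_one t (sq_gen1 t)"
proof (rule minimal_at_one_if_multiple)
  show "trace_form t (sq_gen1 t) (z0, z1, z2) =
      (t^2+3*t+9) * ((z0+z2)^2 + (z1+(t+1)*z2)^2 + z2^2)" for z0 z1 z2
    unfolding sq_gen1_def trace_form_eq power_sum_numeral by simp algebra
qed (auto intro!: sum_squares_ge_one; algebra)

lemma minimal_at_one_sq_gen2: "t \<in> \<int> \<Longrightarrow> minimal_at_one t sq_gen2"
proof (rule minimal_at_one_if_multiple)
  show "trace_form t sq_gen2 (z0, z1, z2) =
      (t^2+3*t+9) * ((z0+(t+1)*z1+(t^2+2*t+3)*z2)^2 + (z1+t*z2)^2 + (z1+(t+1)*z2)^2)" for z0 z1 z2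
    unfolding sq_gen2_def trace_form_eq power_sum_numeral by simp algebra
qed (auto intro!: sum_squares_ge_one; algebra)

lemma minimal_at_one_sq_gen3: "t \<in> \<int> \<Longrightarrow> minimal_at_one t (sq_gen3 t)"
proof (rule minimal_at_one_if_multiple)
  show "trace_form t (sq_gen3 t) (z0, z1, z2) =
      (t^2+3*t+9) * ((z0-z1+2*z2)^2 + z2^2 + (z1+t*z2)^2)" for z0 z1 z2
    unfolding sq_gen3_def trace_form_eq power_sum_numeral by simp algebra
qed (auto intro!: sum_squares_ge_one; algebra)

lemma minimal_at_one_hex_gen1: "t \<in> \<int> \<Longrightarrow> minimal_at_one t (hex_gen1 t)"
proof (rule minimal_at_one_if_multiple)
  show "trace_form t (hex_gen1 t) (z0, z1, z2) =
      (t^2+3*t+9) * hex_form t (z0+t*z1+(t^2+t+2)*z2) (-z1-(t+1)*z2) (-z1-t*z2)" for z0 z1 z2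
    unfolding hex_gen1_def trace_form_eq power_sum_numeral hex_form_def by simp algebra
qed (auto intro!: hex_form_ge_two; algebra)

lemma minimal_at_one_hex_gen2: "t \<in> \<int> \<Longrightarrow> minimal_at_one t (hex_gen2 t)"
proof (rule minimal_at_one_if_multiple)
  show "trace_form t (hex_gen2 t) (z0, z1, z2) =
      (t^2+3*t+9) * hex_form t (z0+(t+2)*z2) (z1+t*z2) (-z2)" for z0 z1 z2
    unfolding hex_gen2_def trace_form_eq power_sum_numeral hex_form_def by simp algebra
qed (auto intro!: hex_form_ge_two; algebra)

lemma minimal_at_one_hex_gen3: "t \<in> \<int> \<Longrightarrow> minimal_at_one t (hex_gen3 t)"
proof (rule minimal_at_one_if_multiple)
  show "trace_form t (hex_gen3 t) (z0, z1, z2) =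
      (t^2+3*t+9) * hex_form t (z0+2*z2) z2 (z1+(t+1)*z2)" for z0 z1 z2
    unfolding hex_gen3_def trace_form_eq power_sum_numeral hex_form_def by simp algebra
qed (auto intro!: hex_form_ge_two; algebra)

text \<open>The units \<open>\<theta>, \<theta>\<^sup>-\<^sup>1, \<theta>', \<theta>'\<^sup>-\<^sup>1, \<theta>'', \<theta>''\<^sup>-\<^sup>1\<close> in coordinates, where
  \<open>\<theta>' = -1/(1 + \<theta>)\<close> and \<open>\<theta>'' = -(1 + \<theta>)/\<theta>\<close> are the conjugates of \<open>\<theta>\<close>.\<close>

definition conjugate_units :: "real \<Rightarrow> coords set" where
  "conjugate_units t = {(0, 1, 0), (-(t+3), -t, 1), (-2, -(t+1), 1), (-1, -1, 0),
     (t+2, t, -1), (1, t+1, -1)}"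

text \<open>The six conditions \<open>trace_excess t c u \<ge> 0\<close>, \<open>u \<in> conjugate_units t\<close>, cut out a cone that
  is the union of the cone spanned by the three \<open>sq_gen\<close> forms and the three cones obtained
  from it by replacing one of them by the corresponding \<open>hex_gen\<close> form.  Up to a positive
  factor, the \<open>center_coeff\<close>s are the coordinates of \<open>c\<close> in the central cone; the other
  coefficients are values of \<open>trace_excess\<close> at the units.\<close>

definition center_coeff1 :: "real \<Rightarrow> coords \<Rightarrow> real" where
  "center_coeff1 t c = (case c of (c0, c1, c2) \<Rightarrow> (t^2+3*t+3)*c0 - 2*t*c1 - (t^2+t+3)*c2)"

definition center_coeff2 :: "real \<Rightarrow> coords \<Rightarrow> real" where
  "center_coeff2 t c = (case c of (c0, c1, c2) \<Rightarrow>
     (t^2+3*t+3)*c0 + (t^3+4*t^2+10*t+9)*c1 + (t^4+5*t^3+16*t^2+23*t+15)*c2)"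

definition center_coeff3 :: "real \<Rightarrow> coords \<Rightarrow> real" where
  "center_coeff3 t c = (case c of (c0, c1, c2) \<Rightarrow> (t^2+3*t+3)*c0 - (t^2+5*t+9)*c1 + (2*t+6)*c2)"

lemma trace_excess_decomposition_sq:
  "(t^2+3*t+9) * (t^2+3*t+3) * trace_excess t (c0, c1, c2) (z0, z1, z2) =
     center_coeff1 t (c0, c1, c2) * trace_excess t (sq_gen1 t) (z0, z1, z2)
     + center_coeff2 t (c0, c1, c2) * trace_excess t sq_gen2 (z0, z1, z2)
     + center_coeff3 t (c0, c1, c2) * trace_excess t (sq_gen3 t) (z0, z1, z2)"
  by (simp add: center_coeff1_def center_coeff2_def center_coeff3_def
      sq_gen1_def sq_gen2_def sq_gen3_def trace_excess_eq trace_form_eq power_sum_numeral) algebra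

lemma trace_excess_decomposition_hex1:
  "(t^2+3*t+9) * trace_excess t (c0, c1, c2) (z0, z1, z2) =
     trace_excess t (c0, c1, c2) (t+2, t, -1) * trace_excess t sq_gen2 (z0, z1, z2)
     + (- center_coeff1 t (c0, c1, c2)) * trace_excess t (hex_gen1 t) (z0, z1, z2)
     + trace_excess t (c0, c1, c2) (-(t+3), -t, 1) * trace_excess t (sq_gen3 t) (z0, z1, z2)"
  by (simp add: center_coeff1_def sq_gen2_def sq_gen3_def hex_gen1_def
      trace_excess_eq trace_form_eq power_sum_numeral) algebra

lemma trace_excess_decomposition_hex2:
  "(t^2+3*t+9) * trace_excess t (c0, c1, c2) (z0, z1, z2) =
     trace_excess t (c0, c1, c2) (0, 1, 0) * trace_excess t (sq_gen3 t) (z0, z1, z2)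
     + (- center_coeff2 t (c0, c1, c2)) * trace_excess t (hex_gen2 t) (z0, z1, z2)
     + trace_excess t (c0, c1, c2) (-1, -1, 0) * trace_excess t (sq_gen1 t) (z0, z1, z2)"
  by (simp add: center_coeff2_def sq_gen3_def sq_gen1_def hex_gen2_def
      trace_excess_eq trace_form_eq power_sum_numeral) algebra

lemma trace_excess_decomposition_hex3:
  "(t^2+3*t+9) * trace_excess t (c0, c1, c2) (z0, z1, z2) =
     trace_excess t (c0, c1, c2) (-2, -(t+1), 1) * trace_excess t (sq_gen1 t) (z0, z1, z2)
     + (- center_coeff3 t (c0, c1, c2)) * trace_excess t (hex_gen3 t) (z0, z1, z2)
     + trace_excess t (c0, c1, c2) (1, t+1, -1) * trace_excess t sq_gen2 (z0, z1, z2)"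
  by (simp add: center_coeff3_def sq_gen1_def sq_gen2_def hex_gen3_def
      trace_excess_eq trace_form_eq power_sum_numeral) algebra

lemma minimal_at_one_if_conjugate_units:
  assumes "t \<in> \<int>" and "\<And>u. u \<in> conjugate_units t \<Longrightarrow> 0 \<le> trace_excess t c u"
  shows "minimal_at_one t c"
proof -
  obtain c0 c1 c2 where c: "c = (c0, c1, c2)" by (cases c)
  note units = assms(2)[unfolded conjugate_units_def c, simplified]
  note sq = minimal_at_one_sq_gen1[OF assms(1)] minimal_at_one_sq_gen2[OF assms(1)]
    minimal_at_one_sq_gen3[OF assms(1)]
  note hex = minimal_at_one_hex_gen1[OF assms(1)] minimal_at_one_hex_gen2[OF assms(1)]
    minimal_at_one_hex_gen3[OF assms(1)]
  consider "center_coeff1 t c \<le> 0" | "center_coeff2 t c \<le> 0" | "center_coeff3 t c \<le> 0"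
    | "0 \<le> center_coeff1 t c" "0 \<le> center_coeff2 t c" "0 \<le> center_coeff3 t c"
    by linarith
  then show ?thesis
  proof cases
    case 1
    show ?thesis unfolding c
      by (rule minimal_at_one_cone[OF sqrt_disc_pos _ _ _ sq(2) hex(1) sq(3)
            trace_excess_decomposition_hex1]) (use 1 units c in auto)
  next
    case 2
    show ?thesis unfolding c
      by (rule minimal_at_one_cone[OF sqrt_disc_pos _ _ _ sq(3) hex(2) sq(1)
            trace_excess_decomposition_hex2]) (use 2 units c in auto)
  next
    case 3
    show ?thesis unfolding c
      by (rule minimal_at_one_cone[OF sqrt_disc_pos _ _ _ sq(1) hex(3) sq(2)
            trace_excess_decomposition_hex3]) (use 3 units c in auto)
  next
    case 4
    show ?thesis unfolding c
      by (rule minimal_at_one_cone[OF center_scale_pos _ _ _ sq trace_excess_decomposition_sq])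
        (use 4 c in auto)
  qed
qed

section \<open>The simplest cubic field\<close>

lemma simplest_cubic_no_rational_root:
  assumes "s \<in> \<rat>"
  shows "poly (simplest_cubic t) s \<noteq> 0"
proof
  assume root: "poly (simplest_cubic t) s = 0"
  have "algebraic_int s"
    by (rule algebraic_int.intros[of "simplest_cubic t"])
       (use root in \<open>auto simp: simplest_cubic_def coeff_pCons split: nat.split\<close>)
  then obtain m where m: "s = of_int m"
    using rational_algebraic_int_is_int[OF _ assms] by (auto elim: Ints_cases)
  have "real_of_int (m * (m^2 - t*m - (t+3))) = 1"
    using root by (simp add: m simplest_cubic_def algebra_simps power2_eq_square power3_eq_cube)
  then have unit: "m * (m^2 - t*m - (t+3)) = 1" by linarith
  then have "m = 1 \<or> m = -1" by (rule pos_zmult_eq_1_iff_lemma)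
  moreover have "m^2 - t*m - (t+3) = m" using unit calculation by auto
  ultimately show False by auto presburger
qed

lemma embedding_fixes_Rats:
  assumes \<sigma>: "\<sigma> \<in> embeddings K" and "\<rat> \<subseteq> K" "q \<in> \<rat>"
  shows "\<sigma> q = of_real q"
proof -
  have add: "\<sigma> (x + y) = \<sigma> x + \<sigma> y" and mult: "\<sigma> (x * y) = \<sigma> x * \<sigma> y"
    if "x \<in> \<rat>" "y \<in> \<rat>" for x y
    using \<sigma> that assms(2) by (auto simp: embeddings_def)
  have one: "\<sigma> 1 = 1" using \<sigma> by (simp add: embeddings_def)
  have int: "\<sigma> (of_int m) = of_int m" for m
  proof (induction m rule: int_induct[where k = 0])
    case base
    show ?case using add[of 0 0] by simp
  next
    case (step1 i)
    then show ?case using add[of "of_int i" 1] one by simp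
  next
    case (step2 i)
    then show ?case using add[of "of_int (i - 1)" 1] one by (simp add: algebra_simps)
  qed
  obtain a b where ab: "b > 0" "q = of_int a / of_int b" using assms(3) by (auto elim: Rats_cases')
  then have "\<sigma> q * of_int b = of_int a"
    using mult[of q "of_int b"] int[of a] int[of b] assms(3) by simp
  then have "\<sigma> q = of_int a / of_int b" using ab(1) by (simp add: field_simps)
  then show ?thesis using ab(2) by simp
qed

locale simplest_cubic_root =
  fixes t :: int and \<theta> :: real
  assumes root: "poly (simplest_cubic t) \<theta> = 0"
begin

lemma cubic_eq: "\<theta>^3 = of_int t * \<theta>^2 + (of_int t + 3) * \<theta> + 1"
  using root by (simp add: simplest_cubic_def algebra_simps power2_eq_square power3_eq_cube)

lemma root_nonzero: "\<theta> \<noteq> 0" and root_plus_one_nonzero: "1 + \<theta> \<noteq> 0"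
  using cubic_eq by (auto simp: add_eq_0_iff)

text \<open>The simplest cubic polynomial is invariant under \<open>x \<mapsto> -1/(1 + x)\<close>, which generates the
  Galois group.\<close>

definition conj_root :: "nat \<Rightarrow> real" where
  "conj_root j = [\<theta>, -1 / (1 + \<theta>), -(1 + \<theta>) / \<theta>] ! j"

lemma conj_root_inverse_eqs: "(1 + \<theta>) * conj_root 1 = -1" "\<theta> * conj_root 2 = -(1 + \<theta>)"
  using root_nonzero root_plus_one_nonzero by (simp_all add: conj_root_def)

lemma conj_root_cubic_eq:
  assumes "j < 3"
  shows "conj_root j ^ 3 = of_int t * conj_root j ^ 2 + (of_int t + 3) * conj_root j + 1"
proof -
  consider "j = 0" | "j = 1" | "j = 2" using assms by linarith
  then show ?thesis
  proof cases
    case 1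
    show ?thesis unfolding 1 using cubic_eq by (simp add: conj_root_def)
  next
    case 2
    show ?thesis unfolding 2 using cubic_eq conj_root_inverse_eqs(1) by algebra
  next
    case 3
    show ?thesis unfolding 3 using cubic_eq conj_root_inverse_eqs(2) by algebra
  qed
qed

lemma conj_root_neq: "conj_root 0 \<noteq> conj_root 1" "conj_root 0 \<noteq> conj_root 2" "conj_root 1 \<noteq> conj_root 2"
proof -
  have "0 \<le> (\<theta> + 1/2)^2" by simp
  then have "\<theta>^2 + \<theta> + 1 \<noteq> 0" by (simp add: power2_eq_square algebra_simps)
  then show "conj_root 0 \<noteq> conj_root 1" "conj_root 0 \<noteq> conj_root 2" "conj_root 1 \<noteq> conj_root 2"
    using root_nonzero root_plus_one_nonzero
    by (auto simp: conj_root_def field_simps power2_eq_square)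
qed

lemma vieta:
  "conj_root 0 + conj_root 1 + conj_root 2 = of_int t"
  "conj_root 0 * conj_root 1 + conj_root 0 * conj_root 2 + conj_root 1 * conj_root 2 = -(of_int t + 3)"
  "conj_root 0 * conj_root 1 * conj_root 2 = 1"
proof -
  have r0: "conj_root 0 = \<theta>" by (simp add: conj_root_def)
  show "conj_root 0 + conj_root 1 + conj_root 2 = of_int t"
    "conj_root 0 * conj_root 1 + conj_root 0 * conj_root 2 + conj_root 1 * conj_root 2 = -(of_int t + 3)"
    "conj_root 0 * conj_root 1 * conj_root 2 = 1"
    unfolding r0 using cubic_eq conj_root_inverse_eqs root_nonzero by algebra+
qed

lemma sum_conj_root_power: "(\<Sum>j<3. conj_root j ^ n) = power_sum (of_int t) n"
proof (induction "real_of_int t" n rule: power_sum.induct)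
  case 1
  then show ?case by simp
next
  case 2
  then show ?case using vieta(1) by (simp add: eval_nat_numeral)
next
  case 3
  have "(\<Sum>j<3. conj_root j ^ 2) = (conj_root 0 + conj_root 1 + conj_root 2)^2
      - 2 * (conj_root 0 * conj_root 1 + conj_root 0 * conj_root 2 + conj_root 1 * conj_root 2)"
    by (simp add: sum_lessThan_three power2_eq_square algebra_simps)
  also have "\<dots> = (of_int t)^2 + 2 * of_int t + 6"
    unfolding vieta by (simp add: algebra_simps)
  finally show ?case by (simp add: numeral_2_eq_2)
next
  case (4 n)
  have "conj_root j ^ (n + 3) = of_int t * conj_root j ^ (n + 2) + (of_int t + 3) * conj_root j ^ (n + 1)
      + conj_root j ^ n" if "j < 3" for j
  proof -
    have "conj_root j ^ n * conj_root j ^ 3 =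
        conj_root j ^ n * (of_int t * conj_root j ^ 2 + (of_int t + 3) * conj_root j + 1)"
      using conj_root_cubic_eq[OF that] by simp
    then show ?thesis by (simp add: power_add algebra_simps power2_eq_square power3_eq_cube)
  qed
  then have "(\<Sum>j<3. conj_root j ^ (n + 3)) = of_int t * (\<Sum>j<3. conj_root j ^ (n + 2))
      + (of_int t + 3) * (\<Sum>j<3. conj_root j ^ (n + 1)) + (\<Sum>j<3. conj_root j ^ n)"
    by (simp add: sum.distrib sum_distrib_left)
  then show ?case using 4 by (simp add: eval_nat_numeral)
qed

lemma root_not_rational: "\<theta> \<notin> \<rat>"
  using simplest_cubic_no_rational_root root by blast

lemma from_coords_eq_zero:
  assumes "coords_in \<rat> (c0, c1, c2)" "from_coords \<theta> (c0, c1, c2) = 0"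
  shows "(c0, c1, c2) = (0, 0, 0)"
proof (cases "c2 = 0")
  case True
  then have "c1 * \<theta> = - c0" using assms(2) by (simp add: from_coords_eq)
  moreover have "c1 \<noteq> 0 \<Longrightarrow> \<theta> = - c0 / c1" using calculation by (simp add: field_simps)
  ultimately show ?thesis
    using True assms(1) root_not_rational by (cases "c1 = 0") auto
next
  case False
  define p q where "p = - c1 / c2" and "q = - c0 / c2"
  have pq: "p \<in> \<rat>" "q \<in> \<rat>" using assms(1) by (auto simp: p_def q_def)
  have sq: "\<theta>^2 = p * \<theta> + q"
    using assms(2) False by (simp add: p_def q_def from_coords_eq field_simps)
  define k l where "k = p^2 + q - t*p - t - 3" and "l = t*q + 1 - p*q"
  have division: "poly (simplest_cubic t) x = (x^2 - p*x - q) * (x - (t - p)) + k*x - l" for x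
    by (simp add: simplest_cubic_def k_def l_def algebra_simps power2_eq_square power3_eq_cube)
  have "k * \<theta> = l" using division[of \<theta>] sq root by simp
  moreover have "k \<in> \<rat>" "l \<in> \<rat>" using pq by (simp_all add: k_def l_def)
  ultimately have "k = 0" "l = 0"
    using root_not_rational by (metis Rats_divide nonzero_mult_div_cancel_left mult_eq_0_iff)+
  then have "poly (simplest_cubic t) (t - p) = 0"
    using division[of "t - p"] by simp
  then show ?thesis
    using simplest_cubic_no_rational_root[of "t - p"] pq by simp
qed

lemma from_coords_inj:
  assumes "coords_in \<rat> c" "coords_in \<rat> d" "from_coords \<theta> c = from_coords \<theta> d"
  shows "c = d"
proof -
  have "coords_in \<rat> (c - d)" "from_coords \<theta> (c - d) = 0"
    using assms by (cases c, cases d, simp add: from_coords_eq algebra_simps)+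
  moreover obtain e0 e1 e2 where e: "c - d = (e0, e1, e2)" by (cases "c - d")
  ultimately have "c - d = 0" using from_coords_eq_zero[of e0 e1 e2] by (simp add: zero_prod_def)
  then show ?thesis by simp
qed

lemma root_times_from_coords:
  "\<theta> * from_coords \<theta> (c0, c1, c2) = from_coords \<theta> (c2, c0 + (of_int t + 3) * c2, c1 + of_int t * c2)"
proof -
  have "c2 * \<theta>^3 = c2 * (of_int t * \<theta>^2 + (of_int t + 3) * \<theta> + 1)"
    using cubic_eq by simp
  then show ?thesis by (simp add: from_coords_eq algebra_simps power2_eq_square power3_eq_cube)
qed

lemma poly_root_in_from_coords:
  assumes "\<int> \<subseteq> S" "\<And>x y. x \<in> S \<Longrightarrow> y \<in> S \<Longrightarrow> x + y \<in> S" "\<And>x y. x \<in> S \<Longrightarrow> y \<in> S \<Longrightarrow> x * y \<in> S"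
    and "\<And>i. coeff p i \<in> S"
  shows "poly p \<theta> \<in> from_coords \<theta> ` Collect (coords_in S)"
  using assms(4)
proof (induction p)
  case 0
  have "poly 0 \<theta> = from_coords \<theta> (0, 0, 0)" by (simp add: from_coords_eq)
  then show ?case using assms(1) by force
next
  case (pCons a p)
  then obtain c0 c1 c2 where c: "coords_in S (c0, c1, c2)" "poly p \<theta> = from_coords \<theta> (c0, c1, c2)"
  proof -
    have "coeff p i \<in> S" for i using pCons.prems[of "Suc i"] by simp
    then show ?thesis using pCons.IH that by force
  qed
  have a: "a \<in> S" using pCons.prems[of 0] by simp
  have t: "of_int t \<in> S" "of_int t + 3 \<in> S" using assms(1,2) by (auto simp: subset_eq)
  have "poly (pCons a p) \<theta> = from_coords \<theta> (a + c2, c0 + (of_int t + 3) * c2, c1 + of_int t * c2)"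
    using root_times_from_coords[of c0 c1 c2] by (simp add: c(2) from_coords_eq)
  moreover have "coords_in S (a + c2, c0 + (of_int t + 3) * c2, c1 + of_int t * c2)"
    using c(1) a t assms(2,3) by simp
  ultimately show ?case by blast
qed

lemma Q_adj_eq: "Q_adj \<theta> = from_coords \<theta> ` Collect (coords_in \<rat>)"
proof
  show "Q_adj \<theta> \<subseteq> from_coords \<theta> ` Collect (coords_in \<rat>)"
    unfolding Q_adj_def using Ints_subset_Rats
    by (auto intro!: poly_root_in_from_coords simp: coeff_map_poly)
  show "from_coords \<theta> ` Collect (coords_in \<rat>) \<subseteq> Q_adj \<theta>"
  proof clarify
    fix c0 c1 c2 assume "coords_in \<rat> (c0, c1, c2)"
    then obtain q0 q1 q2 where "c0 = of_rat q0" "c1 = of_rat q1" "c2 = of_rat q2"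
      by (auto elim!: Rats_cases)
    then have "from_coords \<theta> (c0, c1, c2) = poly (map_poly of_rat [:q0, q1, q2:]) \<theta>"
      by (simp add: from_coords_eq map_poly_pCons algebra_simps power2_eq_square)
    then show "from_coords \<theta> (c0, c1, c2) \<in> Q_adj \<theta>" by (auto simp: Q_adj_def)
  qed
qed

lemma Z_adj_eq: "Z_adj \<theta> = from_coords \<theta> ` Collect (coords_in \<int>)"
proof
  show "Z_adj \<theta> \<subseteq> from_coords \<theta> ` Collect (coords_in \<int>)"
    unfolding Z_adj_def by (auto intro!: poly_root_in_from_coords simp: coeff_map_poly)
  show "from_coords \<theta> ` Collect (coords_in \<int>) \<subseteq> Z_adj \<theta>"
  proof clarify
    fix c0 c1 c2 assume "coords_in \<int> (c0, c1, c2)"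
    then obtain q0 q1 q2 where "c0 = of_int q0" "c1 = of_int q1" "c2 = of_int q2"
      by (auto elim!: Ints_cases)
    then have "from_coords \<theta> (c0, c1, c2) = poly (map_poly of_int [:q0, q1, q2:]) \<theta>"
      by (simp add: from_coords_eq map_poly_pCons algebra_simps power2_eq_square)
    then show "from_coords \<theta> (c0, c1, c2) \<in> Z_adj \<theta>" by (auto simp: Z_adj_def)
  qed
qed

definition coords_of :: "real \<Rightarrow> coords" where
  "coords_of x = (THE c. coords_in \<rat> c \<and> from_coords \<theta> c = x)"

lemma coords_of_from_coords: "coords_in \<rat> c \<Longrightarrow> coords_of (from_coords \<theta> c) = c"
  unfolding coords_of_def by (rule the_equality) (auto intro: from_coords_inj)

lemma from_coords_in_Q_adj: "coords_in \<rat> c \<Longrightarrow> from_coords \<theta> c \<in> Q_adj \<theta>"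
  by (simp add: Q_adj_eq)

lemma
  assumes "x \<in> Q_adj \<theta>"
  shows coords_in_Rats_coords_of: "coords_in \<rat> (coords_of x)"
    and from_coords_coords_of: "from_coords \<theta> (coords_of x) = x"
  using assms coords_of_from_coords by (auto simp: Q_adj_eq)

lemma Q_adj_add:
  assumes "x \<in> Q_adj \<theta>" "y \<in> Q_adj \<theta>"
  shows "x + y \<in> Q_adj \<theta>" and "coords_of (x + y) = coords_of x + coords_of y"
proof -
  have c: "coords_in \<rat> (coords_of x + coords_of y)"
    using assms by (intro coords_in_Rats_add coords_in_Rats_coords_of)
  have "from_coords \<theta> (coords_of x + coords_of y) = x + y"
    using assms by (simp add: from_coords_add from_coords_coords_of)
  then show "x + y \<in> Q_adj \<theta>" "coords_of (x + y) = coords_of x + coords_of y"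
    using from_coords_in_Q_adj[OF c] coords_of_from_coords[OF c] by simp_all
qed

lemma Q_adj_mult:
  assumes "x \<in> Q_adj \<theta>" "y \<in> Q_adj \<theta>"
  shows "x * y \<in> Q_adj \<theta>" and "coords_of (x * y) = mult_coords t (coords_of x) (coords_of y)"
proof -
  have c: "coords_in \<rat> (mult_coords t (coords_of x) (coords_of y))"
    using assms by (intro coords_in_Rats_mult_coords coords_in_Rats_coords_of) auto
  have "from_coords \<theta> (mult_coords t (coords_of x) (coords_of y)) = x * y"
    using assms cubic_eq by (simp add: from_coords_mult[symmetric] from_coords_coords_of)
  then show "x * y \<in> Q_adj \<theta>" "coords_of (x * y) = mult_coords t (coords_of x) (coords_of y)"
    using from_coords_in_Q_adj[OF c] coords_of_from_coords[OF c] by simp_all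
qed

lemma Rats_subset_Q_adj: "\<rat> \<subseteq> Q_adj \<theta>"
proof
  fix q :: real assume "q \<in> \<rat>"
  then show "q \<in> Q_adj \<theta>" using from_coords_in_Q_adj[of "(q, 0, 0)"] by (simp add: from_coords_eq)
qed

lemma root_in_Q_adj: "\<theta> \<in> Q_adj \<theta>"
  using from_coords_in_Q_adj[of "(0, 1, 0)"] by (simp add: from_coords_eq)

lemma coords_of_one: "coords_of 1 = (1, 0, 0)" and coords_of_root: "coords_of \<theta> = (0, 1, 0)"
  using coords_of_from_coords[of "(1, 0, 0)"] coords_of_from_coords[of "(0, 1, 0)"]
  by (simp_all add: from_coords_eq)

lemma from_coords_conj_root_mult:
  assumes "j < 3" "x \<in> Q_adj \<theta>" "y \<in> Q_adj \<theta>"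
  shows "from_coords (conj_root j) (coords_of (x * y)) =
    from_coords (conj_root j) (coords_of x) * from_coords (conj_root j) (coords_of y)"
  using assms conj_root_cubic_eq[OF assms(1)] by (simp add: Q_adj_mult from_coords_mult)

definition conj_embedding :: "nat \<Rightarrow> real \<Rightarrow> complex" where
  "conj_embedding j x =
     (if x \<in> Q_adj \<theta> then of_real (from_coords (conj_root j) (coords_of x)) else 0)"

lemma conj_embedding_root: "conj_embedding j \<theta> = of_real (conj_root j)"
  using root_in_Q_adj by (simp add: conj_embedding_def coords_of_root from_coords_eq)

lemma conj_embedding_in_embeddings:
  assumes "j < 3"
  shows "conj_embedding j \<in> embeddings (Q_adj \<theta>)"
  unfolding embeddings_def
proof (intro CollectI conjI ballI allI impI)
  show "conj_embedding j 1 = 1"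
    using from_coords_in_Q_adj[of "(1, 0, 0)"]
    by (simp add: conj_embedding_def coords_of_one from_coords_eq)
  fix x y assume xy: "x \<in> Q_adj \<theta>" "y \<in> Q_adj \<theta>"
  then show "conj_embedding j (x + y) = conj_embedding j x + conj_embedding j y"
    by (simp add: conj_embedding_def Q_adj_add from_coords_add)
  show "conj_embedding j (x * y) = conj_embedding j x * conj_embedding j y"
    using xy assms by (simp add: conj_embedding_def Q_adj_mult(1) from_coords_conj_root_mult)
qed (simp add: conj_embedding_def)

lemma embedding_from_coords:
  assumes \<sigma>: "\<sigma> \<in> embeddings (Q_adj \<theta>)" and c: "coords_in \<rat> (c0, c1, c2)"
  shows "\<sigma> (from_coords \<theta> (c0, c1, c2)) = of_real c0 + of_real c1 * \<sigma> \<theta> + of_real c2 * \<sigma> \<theta> ^ 2"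
proof -
  have add: "\<sigma> (x + y) = \<sigma> x + \<sigma> y" and mult: "\<sigma> (x * y) = \<sigma> x * \<sigma> y"
    if "x \<in> Q_adj \<theta>" "y \<in> Q_adj \<theta>" for x y
    using \<sigma> that by (auto simp: embeddings_def)
  have in_K: "c0 \<in> Q_adj \<theta>" "c1 \<in> Q_adj \<theta>" "c2 \<in> Q_adj \<theta>" "\<theta> * \<theta> \<in> Q_adj \<theta>"
    using c Rats_subset_Q_adj root_in_Q_adj Q_adj_mult by auto
  have "\<sigma> (from_coords \<theta> (c0, c1, c2)) = \<sigma> (c0 + c1 * \<theta> + c2 * (\<theta> * \<theta>))"
    by (simp add: from_coords_eq power2_eq_square)
  also have "\<dots> = \<sigma> c0 + \<sigma> c1 * \<sigma> \<theta> + \<sigma> c2 * (\<sigma> \<theta> * \<sigma> \<theta>)"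
    using in_K root_in_Q_adj by (simp add: add mult Q_adj_add Q_adj_mult)
  finally show ?thesis
    using embedding_fixes_Rats[OF \<sigma> Rats_subset_Q_adj] c by (simp add: power2_eq_square)
qed

lemma embedding_root_conj_root:
  assumes \<sigma>: "\<sigma> \<in> embeddings (Q_adj \<theta>)"
  obtains j where "j < 3" "\<sigma> \<theta> = of_real (conj_root j)"
proof -
  define w where "w = \<sigma> \<theta>"
  have "\<sigma> (\<theta> * \<theta> * \<theta>) = w * w * w"
    using \<sigma> root_in_Q_adj Q_adj_mult by (simp add: embeddings_def w_def)
  moreover have "\<theta> * \<theta> * \<theta> = from_coords \<theta> (1, of_int t + 3, of_int t)"
    using cubic_eq by (simp add: from_coords_eq power2_eq_square power3_eq_cube algebra_simps)
  ultimately have "w^3 = 1 + (of_int t + 3) * w + of_int t * w^2"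
    using embedding_from_coords[OF \<sigma>, of 1 "of_int t + 3" "of_int t"]
    by (simp add: w_def power3_eq_cube)
  moreover note vieta[THEN arg_cong[where f = complex_of_real]]
  ultimately have "(w - of_real (conj_root 0)) * (w - of_real (conj_root 1)) * (w - of_real (conj_root 2)) = 0"
    by (simp add: algebra_simps) algebra
  then show ?thesis using that[of 0] that[of 1] that[of 2] by (auto simp: w_def)
qed

lemma embeddings_Q_adj: "embeddings (Q_adj \<theta>) = conj_embedding ` {..<3}"
proof
  show "conj_embedding ` {..<3} \<subseteq> embeddings (Q_adj \<theta>)"
    using conj_embedding_in_embeddings by auto
  show "embeddings (Q_adj \<theta>) \<subseteq> conj_embedding ` {..<3}"
  proof
    fix \<sigma> assume \<sigma>: "\<sigma> \<in> embeddings (Q_adj \<theta>)"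
    then obtain j where j: "j < 3" "\<sigma> \<theta> = of_real (conj_root j)"
      by (rule embedding_root_conj_root)
    have "\<sigma> x = conj_embedding j x" for x
    proof (cases "x \<in> Q_adj \<theta>")
      case True
      obtain c0 c1 c2 where c: "coords_of x = (c0, c1, c2)" by (cases "coords_of x")
      have "\<sigma> x = \<sigma> (from_coords \<theta> (c0, c1, c2))" using from_coords_coords_of[OF True] by (simp add: c)
      also have "\<dots> = of_real (from_coords (conj_root j) (c0, c1, c2))"
        using embedding_from_coords[OF \<sigma>] coords_in_Rats_coords_of[OF True] c j(2)
        by (simp add: from_coords_eq)
      finally show ?thesis using True c by (simp add: conj_embedding_def)
    next
      case False
      then show ?thesis using \<sigma> by (simp add: embeddings_def conj_embedding_def)
    qed
    then show "\<sigma> \<in> conj_embedding ` {..<3}" using j(1) by auto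
  qed
qed

lemma inj_on_conj_embedding: "inj_on conj_embedding {..<3}"
proof (rule inj_onI)
  fix i j assume "i \<in> {..<3}" "j \<in> {..<3}" "conj_embedding i = conj_embedding j"
  moreover from this have "conj_root i = conj_root j" by (metis conj_embedding_root of_real_eq_iff)
  ultimately show "i = j" using conj_root_neq by (auto simp: less_Suc_eq numeral_eq_Suc)
qed

lemma trace_Q_adj:
  "x \<in> Q_adj \<theta> \<Longrightarrow> trace (Q_adj \<theta>) x = (\<Sum>j<3. from_coords (conj_root j) (coords_of x))"
  by (simp add: trace_def embeddings_Q_adj sum.reindex[OF inj_on_conj_embedding] conj_embedding_def)

lemma trace_mult_square_conj:
  assumes "x \<in> Q_adj \<theta>" "y \<in> Q_adj \<theta>"
  shows "trace (Q_adj \<theta>) (x * y^2) =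
    (\<Sum>j<3. from_coords (conj_root j) (coords_of x) * (from_coords (conj_root j) (coords_of y))^2)"
  using assms Q_adj_mult(1) by (simp add: trace_Q_adj power2_eq_square from_coords_conj_root_mult)

lemma trace_mult_square:
  assumes "x \<in> Q_adj \<theta>" "y \<in> Q_adj \<theta>"
  shows "trace (Q_adj \<theta>) (x * y^2) = trace_form (of_int t) (coords_of x) (coords_of y)"
  using trace_mult_square_conj[OF assms] trace_form_eq_sum_conjugates[OF sum_conj_root_power] by simp

lemma trace_mult_square_coords:
  assumes "b \<in> Q_adj \<theta>" "coords_in \<rat> z"
  shows "trace (Q_adj \<theta>) (b * (from_coords \<theta> z)^2) = trace_form (of_int t) (coords_of b) z"
  using trace_mult_square[OF assms(1) from_coords_in_Q_adj[OF assms(2)]] coords_of_from_coords[OF assms(2)]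
  by simp

lemma totally_positive_conj:
  assumes "a \<in> totally_positive (Q_adj \<theta>)" "j < 3"
  shows "0 < from_coords (conj_root j) (coords_of a)"
  using assms conj_embedding_in_embeddings[OF assms(2)]
  by (auto simp: totally_positive_def conj_embedding_def)

lemma one_in_unit_group: "1 \<in> unit_group (Q_adj \<theta>)"
  using Rats_subset_Q_adj by (auto simp: unit_group_def ring_of_integers_def)

end

section \<open>Units of \<open>\<int>[\<theta>]\<close>\<close>

locale monogenic_simplest_cubic = simplest_cubic_root +
  assumes monogenic: "ring_of_integers (Q_adj \<theta>) = Z_adj \<theta>"
begin

lemma ring_of_integers_eq: "ring_of_integers (Q_adj \<theta>) = from_coords \<theta> ` Collect (coords_in \<int>)"
  by (simp add: monogenic Z_adj_eq)

lemma coords_in_Ints: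
  assumes "y \<in> ring_of_integers (Q_adj \<theta>)"
  shows "coords_in \<int> (coords_of y)"
proof -
  obtain c where c: "coords_in \<int> c" "y = from_coords \<theta> c"
    using assms by (auto simp: ring_of_integers_eq)
  then have "coords_of y = c"
    using coords_of_from_coords coords_in_mono[OF Ints_subset_Rats] by simp
  then show ?thesis using c(1) by simp
qed

lemma ring_of_integers_mult:
  assumes "x \<in> ring_of_integers (Q_adj \<theta>)" "y \<in> ring_of_integers (Q_adj \<theta>)"
  shows "x * y \<in> ring_of_integers (Q_adj \<theta>)"
proof -
  obtain c d where "coords_in \<int> c" "coords_in \<int> d" "x = from_coords \<theta> c" "y = from_coords \<theta> d"
    using assms by (auto simp: ring_of_integers_eq)
  then show ?thesis
    using cubic_eq by (auto simp: ring_of_integers_eq from_coords_mult intro!: coords_in_Ints_mult_coords)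
qed

lemma unit_group_mult:
  "u \<in> unit_group (Q_adj \<theta>) \<Longrightarrow> v \<in> unit_group (Q_adj \<theta>) \<Longrightarrow> u * v \<in> unit_group (Q_adj \<theta>)"
  by (simp add: unit_group_def ring_of_integers_mult inverse_mult_distrib)

lemma from_coords_in_unit_group:
  assumes "coords_in \<int> c" "coords_in \<int> d" "mult_coords (of_int t) c d = (1, 0, 0)"
  shows "from_coords \<theta> c \<in> unit_group (Q_adj \<theta>)" "from_coords \<theta> d \<in> unit_group (Q_adj \<theta>)"
proof -
  have cd: "from_coords \<theta> c * from_coords \<theta> d = 1"
    using assms(3) cubic_eq by (simp add: from_coords_mult from_coords_eq)
  then have "inverse (from_coords \<theta> c) = from_coords \<theta> d" "inverse (from_coords \<theta> d) = from_coords \<theta> c"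
    by (simp_all add: inverse_unique mult.commute)
  then show "from_coords \<theta> c \<in> unit_group (Q_adj \<theta>)" "from_coords \<theta> d \<in> unit_group (Q_adj \<theta>)"
    using assms(1,2) cd by (auto simp: unit_group_def ring_of_integers_eq)
qed

lemma conjugate_units_in_unit_group:
  assumes "u \<in> conjugate_units (of_int t)"
  shows "from_coords \<theta> u \<in> unit_group (Q_adj \<theta>)"
proof -
  have "mult_coords (of_int t) (0, 1, 0) (-(of_int t + 3), - of_int t, 1) = (1, 0, 0)"
    "mult_coords (of_int t) (-2, -(of_int t + 1), 1) (-1, -1, 0) = (1, 0, 0)"
    "mult_coords (of_int t) (of_int t + 2, of_int t, -1) (1, of_int t + 1, -1) = (1, 0, 0)"
    by (simp_all add: mult_coords_def algebra_simps power2_eq_square)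
  note pairs = from_coords_in_unit_group[OF _ _ this(1)] from_coords_in_unit_group[OF _ _ this(2)]
    from_coords_in_unit_group[OF _ _ this(3)]
  show ?thesis
    using assms pairs[simplified] by (auto simp: conjugate_units_def)
qed

lemma finite_units_trace_le:
  assumes a: "a \<in> totally_positive (Q_adj \<theta>)"
  shows "finite {u \<in> unit_group (Q_adj \<theta>). trace (Q_adj \<theta>) (a * u^2) \<le> C}"
proof -
  have aK: "a \<in> Q_adj \<theta>" using a by (simp add: totally_positive_def)
  define w where "w j = from_coords (conj_root j) (coords_of a)" for j
  have w: "0 < w j" if "j < 3" for j using totally_positive_conj[OF a that] by (simp add: w_def)
  define M where "M = 1 + (\<Sum>i<3. \<bar>C\<bar> / w i)"
  obtain B where B: "\<And>c0 c1 c2 M. \<bar>from_coords (conj_root 0) (c0, c1, c2)\<bar> \<le> M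
      \<Longrightarrow> \<bar>from_coords (conj_root 1) (c0, c1, c2)\<bar> \<le> M \<Longrightarrow> \<bar>from_coords (conj_root 2) (c0, c1, c2)\<bar> \<le> M
      \<Longrightarrow> \<bar>c0\<bar> \<le> B * M \<and> \<bar>c1\<bar> \<le> B * M \<and> \<bar>c2\<bar> \<le> B * M"
    using coords_bounded_by_values[OF conj_root_neq] by blast
  define Zb where "Zb = {x \<in> \<int>. \<bar>x\<bar> \<le> B * M}"
  have sub: "{u \<in> unit_group (Q_adj \<theta>). trace (Q_adj \<theta>) (a * u^2) \<le> C} \<subseteq> from_coords \<theta> ` (Zb \<times> Zb \<times> Zb)"
  proof clarify
    fix u assume u: "u \<in> unit_group (Q_adj \<theta>)" and trace_le: "trace (Q_adj \<theta>) (a * u^2) \<le> C"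
    have uO: "u \<in> ring_of_integers (Q_adj \<theta>)" using u by (simp add: unit_group_def)
    then have uK: "u \<in> Q_adj \<theta>" by (simp add: ring_of_integers_def)
    obtain z0 z1 z2 where z: "coords_of u = (z0, z1, z2)" by (cases "coords_of u")
    define v where "v j = from_coords (conj_root j) (coords_of u)" for j
    have sum_le: "(\<Sum>j<3. w j * (v j)^2) \<le> C"
      using trace_le trace_mult_square_conj[OF aK uK] by (simp add: w_def v_def)
    have "\<bar>v j\<bar> \<le> M" if "j < 3" for j
      unfolding M_def by (rule abs_le_of_weighted_sum_squares_le[OF w sum_le that])
    then have "\<bar>z0\<bar> \<le> B * M \<and> \<bar>z1\<bar> \<le> B * M \<and> \<bar>z2\<bar> \<le> B * M"
      by (intro B) (simp_all add: v_def z)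
    moreover have "coords_in \<int> (z0, z1, z2)" using coords_in_Ints[OF uO] z by simp
    moreover have "u = from_coords \<theta> (z0, z1, z2)" using from_coords_coords_of[OF uK] z by simp
    ultimately show "u \<in> from_coords \<theta> ` (Zb \<times> Zb \<times> Zb)" by (auto simp: Zb_def)
  qed
  have "finite Zb" unfolding Zb_def by (rule finite_abs_int_segment)
  then have "finite (from_coords \<theta> ` (Zb \<times> Zb \<times> Zb))" by (intro finite_imageI finite_SigmaI)
  then show ?thesis using sub by (rule finite_subset[rotated])
qed

lemma exists_unit_trace_minimal:
  assumes "a \<in> totally_positive (Q_adj \<theta>)"
  obtains v where "v \<in> unit_group (Q_adj \<theta>)"
    "\<And>u. u \<in> unit_group (Q_adj \<theta>) \<Longrightarrow> trace (Q_adj \<theta>) (a * v^2) \<le> trace (Q_adj \<theta>) (a * u^2)"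
proof -
  define f where "f u = trace (Q_adj \<theta>) (a * u^2)" for u
  define S where "S = {u \<in> unit_group (Q_adj \<theta>). f u \<le> f 1}"
  have S: "finite S" "1 \<in> S"
    using finite_units_trace_le[OF assms] one_in_unit_group by (simp_all add: S_def f_def)
  define v where "v = arg_min_on f S"
  have v: "v \<in> S" unfolding v_def by (rule arg_min_if_finite(1)[OF S(1)]) (use S(2) in auto)
  have v_least: "f v \<le> f u" if "u \<in> S" for u
    unfolding v_def by (rule arg_min_least[OF S(1)]) (use that in auto)
  show ?thesis
  proof (rule that)
    show "v \<in> unit_group (Q_adj \<theta>)" using v by (simp add: S_def)
    fix u assume u: "u \<in> unit_group (Q_adj \<theta>)"
    show "trace (Q_adj \<theta>) (a * v^2) \<le> trace (Q_adj \<theta>) (a * u^2)"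
    proof (cases "u \<in> S")
      case True
      then show ?thesis using v_least by (simp add: f_def)
    next
      case False
      then show ?thesis using u v_least[OF S(2)] by (simp add: S_def f_def)
    qed
  qed
qed

lemma minimal_at_one_of_minimal_unit:
  assumes a: "a \<in> totally_positive (Q_adj \<theta>)" and v: "v \<in> unit_group (Q_adj \<theta>)"
    and v_min: "\<And>u. u \<in> unit_group (Q_adj \<theta>) \<Longrightarrow> trace (Q_adj \<theta>) (a * v^2) \<le> trace (Q_adj \<theta>) (a * u^2)"
  shows "minimal_at_one (of_int t) (coords_of (a * v^2))"
proof (rule minimal_at_one_if_conjugate_units)
  have b: "a * v^2 \<in> Q_adj \<theta>"
    using a v by (auto simp: totally_positive_def unit_group_def ring_of_integers_def
        power2_eq_square Q_adj_mult)
  fix u assume u: "u \<in> conjugate_units (of_int t)"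
  then have "trace (Q_adj \<theta>) (a * v^2) \<le> trace (Q_adj \<theta>) (a * (v * from_coords \<theta> u)^2)"
    using v v_min unit_group_mult conjugate_units_in_unit_group by blast
  moreover have "coords_in \<rat> u" using u by (auto simp: conjugate_units_def)
  ultimately show "0 \<le> trace_excess (of_int t) (coords_of (a * v^2)) u"
    using trace_mult_square_coords[OF b, of u] trace_mult_square_coords[OF b, of "(1, 0, 0)"]
    by (simp add: trace_excess_def from_coords_eq power_mult_distrib mult_ac)
qed simp

lemma minimal_unit_minimizes_trace:
  assumes a: "a \<in> totally_positive (Q_adj \<theta>)" and v: "v \<in> unit_group (Q_adj \<theta>)"
    and v_min: "\<And>u. u \<in> unit_group (Q_adj \<theta>) \<Longrightarrow> trace (Q_adj \<theta>) (a * v^2) \<le> trace (Q_adj \<theta>) (a * u^2)"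
    and y: "y \<in> ring_of_integers (Q_adj \<theta>)" "y \<noteq> 0"
  shows "trace (Q_adj \<theta>) (a * v^2) \<le> trace (Q_adj \<theta>) (a * y^2)"
proof -
  have v': "v \<noteq> 0" "inverse v \<in> ring_of_integers (Q_adj \<theta>)"
    using v by (auto simp: unit_group_def)
  define b where "b = a * v^2"
  have b: "b \<in> Q_adj \<theta>"
    using a v by (auto simp: b_def totally_positive_def unit_group_def ring_of_integers_def
        power2_eq_square Q_adj_mult)
  \<comment> \<open>\<open>a y\<^sup>2 = b z\<^sup>2\<close> with \<open>z = y / v\<close> integral and nonzero, and \<open>b\<close> is minimal at \<open>1\<close>\<close>
  define z where "z = y * inverse v"
  have zO: "z \<in> ring_of_integers (Q_adj \<theta>)" unfolding z_def using ring_of_integers_mult y(1) v'(2) by blast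
  then have zK: "z \<in> Q_adj \<theta>" by (simp add: ring_of_integers_def)
  have "coords_of z \<noteq> (0, 0, 0)"
    using from_coords_coords_of[OF zK] y(2) v'(1) by (auto simp: z_def from_coords_eq)
  then have "0 \<le> trace_excess (of_int t) (coords_of b) (coords_of z)"
    using minimal_at_one_of_minimal_unit[OF a v v_min] coords_in_Ints[OF zO]
    unfolding minimal_at_one_def b_def by blast
  have "trace (Q_adj \<theta>) (a * v^2) = trace_form (of_int t) (coords_of b) (1, 0, 0)"
    using trace_mult_square_coords[OF b, of "(1, 0, 0)"] by (simp add: b_def from_coords_eq)
  also have "\<dots> \<le> trace_form (of_int t) (coords_of b) (coords_of z)"
    using \<open>0 \<le> trace_excess _ _ _\<close> by (simp add: trace_excess_def)
  also have "\<dots> = trace (Q_adj \<theta>) (b * z^2)"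
    using trace_mult_square[OF b zK] by simp
  also have "\<dots> = trace (Q_adj \<theta>) (a * y^2)"
    using v'(1) by (simp add: b_def z_def power2_eq_square field_simps)
  finally show ?thesis .
qed

end

theorem theorem5:
  fixes t :: int and \<theta> :: real
  assumes "t \<ge> -1"
    and "poly (simplest_cubic t) \<theta> = 0"
    and "ring_of_integers (Q_adj \<theta>) = Z_adj \<theta>"
  shows "unit_reducible (Q_adj \<theta>)"
proof -
  interpret monogenic_simplest_cubic t \<theta>
    using assms(2,3) by unfold_locales
  show ?thesis
    unfolding unit_reducible_def mu_def
  proof
    fix a assume a: "a \<in> totally_positive (Q_adj \<theta>)"
    define f where "f x = trace (Q_adj \<theta>) (a * x^2)" for x
    obtain v where v: "v \<in> unit_group (Q_adj \<theta>)" "\<And>u. u \<in> unit_group (Q_adj \<theta>) \<Longrightarrow> f v \<le> f u"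
      using exists_unit_trace_minimal[OF a] unfolding f_def by blast
    have "Inf (f ` (ring_of_integers (Q_adj \<theta>) - {0})) = f v"
      using v minimal_unit_minimizes_trace[OF a v(1)]
      by (intro cInf_eq_minimum) (auto simp: unit_group_def f_def)
    moreover have "Inf (f ` unit_group (Q_adj \<theta>)) = f v"
      using v by (intro cInf_eq_minimum) auto
    ultimately show "Inf (f ` (ring_of_integers (Q_adj \<theta>) - {0})) = Inf (f ` unit_group (Q_adj \<theta>))"
      by simp
  qed
qed

end
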